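(* Let $\mathcal M$ be a symmetric monoidal category and let $\pi_{\mathcal M}\colon\mathcal M\to P(\mathcal M)$ be the functor described in the context. Then a morphism $[A,f]\colon X\to Y$ of $P(\mathcal M)$ is an isomorphism in $P(\mathcal M)$ if and only if $f$ is an isomorphism in $\mathcal M$. In particular, $\pi_{\mathcal M}$ reflects isomorphisms.
   Context: Let $(\mathcal M,\otimes,I,a,\ell,r)$ be a symmetric monoidal category (associator $a$, left unitor $\ell$, right unitor $r$, symmetry $b$). An object $A$ is weakly invertible if there is $B$ with $A\otimes B\cong B\otimes A\cong I$. The category $P(\mathcal M)$ is defined as follows: its objects are those of $\mathcal M$; a morphism $X\to Y$ is an equivalence class $[A,f]$ of pairs $(A,f)$ with $A$ a weakly invertible object of $\mathcal M$ and $f\colon X\to Y\otimes A$ a morphism of $\mathcal M$, where $(A,f)$ and $(A',f')$ are equivalent iff there is an isomorphism $\alpha\colon A\to A'$ in $\mathcal M$ with $(Y\otimes\alpha)\circ f=f'$. The composite of $[A,f]\colon X\to Y$ and $[B,g]\colon Y\to Z$ is $[B\otimes A,\ a_{Z,B,A}\circ(g\otimes A)\circ f]$, and the identity on $X$ is $[I,r_X^{-1}]$. The functor $\pi_{\mathcal M}\colon\mathcal M\to P(\mathcal M)$ is the identity on objects and sends $f\colon X\to Y$ to $[I,\ r_Y^{-1}\circ f]$. *)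

theory Defs
  imports Main
begin

text \<open>A symmetric monoidal category, presented with object type 'o (every element
of 'o is an object) and morphism type 'm, with typed hom-sets.
Cmp g f is the composite "g after f".\<close>

record ('o, 'm) smc =
  Arr  :: "'o \<Rightarrow> 'o \<Rightarrow> 'm set"
  Cmp  :: "'m \<Rightarrow> 'm \<Rightarrow> 'm"
  Id   :: "'o \<Rightarrow> 'm"
  TenO :: "'o \<Rightarrow> 'o \<Rightarrow> 'o"
  TenA :: "'m \<Rightarrow> 'm \<Rightarrow> 'm"
  Unit :: "'o"
  Asc  :: "'o \<Rightarrow> 'o \<Rightarrow> 'o \<Rightarrow> 'm"
  Lu   :: "'o \<Rightarrow> 'm"
  Ru   :: "'o \<Rightarrow> 'm"
  Br   :: "'o \<Rightarrow> 'o \<Rightarrow> 'm"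

definition iso_in :: "('o, 'm) smc \<Rightarrow> 'o \<Rightarrow> 'o \<Rightarrow> 'm \<Rightarrow> bool" where
  "iso_in M X Y f \<longleftrightarrow> f \<in> Arr M X Y \<and>
     (\<exists>g \<in> Arr M Y X. Cmp M g f = Id M X \<and> Cmp M f g = Id M Y)"

definition inv_in :: "('o, 'm) smc \<Rightarrow> 'o \<Rightarrow> 'o \<Rightarrow> 'm \<Rightarrow> 'm" where
  "inv_in M X Y f = (SOME g. g \<in> Arr M Y X \<and> Cmp M g f = Id M X \<and> Cmp M f g = Id M Y)"

definition lw :: "('o, 'm) smc \<Rightarrow> 'o \<Rightarrow> 'm \<Rightarrow> 'm" where
  "lw M X f = TenA M (Id M X) f"
definition rw :: "('o, 'm) smc \<Rightarrow> 'm \<Rightarrow> 'o \<Rightarrow> 'm" where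
  "rw M f X = TenA M f (Id M X)"

definition smc :: "('o, 'm) smc \<Rightarrow> bool" where
  "smc M \<longleftrightarrow>
   \<comment> \<open>category\<close>
   (\<forall>X Y X' Y' f. f \<in> Arr M X Y \<longrightarrow> f \<in> Arr M X' Y' \<longrightarrow> X = X' \<and> Y = Y') \<and>
   (\<forall>X Y Z f g. f \<in> Arr M X Y \<longrightarrow> g \<in> Arr M Y Z \<longrightarrow> Cmp M g f \<in> Arr M X Z) \<and>
   (\<forall>X. Id M X \<in> Arr M X X) \<and>
   (\<forall>X Y f. f \<in> Arr M X Y \<longrightarrow> Cmp M f (Id M X) = f \<and> Cmp M (Id M Y) f = f) \<and>
   (\<forall>W X Y Z f g h. f \<in> Arr M W X \<longrightarrow> g \<in> Arr M X Y \<longrightarrow> h \<in> Arr M Y Z \<longrightarrow>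
      Cmp M h (Cmp M g f) = Cmp M (Cmp M h g) f) \<and>
   \<comment> \<open>tensor is a bifunctor\<close>
   (\<forall>X Y X' Y' f g. f \<in> Arr M X Y \<longrightarrow> g \<in> Arr M X' Y' \<longrightarrow>
      TenA M f g \<in> Arr M (TenO M X X') (TenO M Y Y')) \<and>
   (\<forall>X Y. TenA M (Id M X) (Id M Y) = Id M (TenO M X Y)) \<and>
   (\<forall>X Y Z X' Y' Z' f g f' g'. f \<in> Arr M X Y \<longrightarrow> g \<in> Arr M Y Z \<longrightarrow>
      f' \<in> Arr M X' Y' \<longrightarrow> g' \<in> Arr M Y' Z' \<longrightarrow>
      TenA M (Cmp M g f) (Cmp M g' f') = Cmp M (TenA M g g') (TenA M f f')) \<and>
   \<comment> \<open>associator: natural isomorphism\<close>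
   (\<forall>X Y Z. iso_in M (TenO M (TenO M X Y) Z) (TenO M X (TenO M Y Z)) (Asc M X Y Z)) \<and>
   (\<forall>X Y Z X' Y' Z' f g h. f \<in> Arr M X X' \<longrightarrow> g \<in> Arr M Y Y' \<longrightarrow> h \<in> Arr M Z Z' \<longrightarrow>
      Cmp M (Asc M X' Y' Z') (TenA M (TenA M f g) h)
        = Cmp M (TenA M f (TenA M g h)) (Asc M X Y Z)) \<and>
   \<comment> \<open>unitors: natural isomorphisms\<close>
   (\<forall>X. iso_in M (TenO M (Unit M) X) X (Lu M X)) \<and>
   (\<forall>X Y f. f \<in> Arr M X Y \<longrightarrow> Cmp M f (Lu M X) = Cmp M (Lu M Y) (lw M (Unit M) f)) \<and>
   (\<forall>X. iso_in M (TenO M X (Unit M)) X (Ru M X)) \<and>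
   (\<forall>X Y f. f \<in> Arr M X Y \<longrightarrow> Cmp M f (Ru M X) = Cmp M (Ru M Y) (rw M f (Unit M))) \<and>
   \<comment> \<open>symmetry: natural, self-inverse\<close>
   (\<forall>X Y. Br M X Y \<in> Arr M (TenO M X Y) (TenO M Y X)) \<and>
   (\<forall>X Y X' Y' f g. f \<in> Arr M X X' \<longrightarrow> g \<in> Arr M Y Y' \<longrightarrow>
      Cmp M (Br M X' Y') (TenA M f g) = Cmp M (TenA M g f) (Br M X Y)) \<and>
   (\<forall>X Y. Cmp M (Br M Y X) (Br M X Y) = Id M (TenO M X Y)) \<and>
   \<comment> \<open>pentagon\<close>
   (\<forall>W X Y Z.
      Cmp M (Asc M W X (TenO M Y Z)) (Asc M (TenO M W X) Y Z)
      = Cmp M (lw M W (Asc M X Y Z))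
          (Cmp M (Asc M W (TenO M X Y) Z) (rw M (Asc M W X Y) Z))) \<and>
   \<comment> \<open>triangle\<close>
   (\<forall>X Y. Cmp M (lw M X (Lu M Y)) (Asc M X (Unit M) Y) = rw M (Ru M X) Y) \<and>
   \<comment> \<open>hexagon\<close>
   (\<forall>X Y Z.
      Cmp M (Asc M Y Z X) (Cmp M (Br M X (TenO M Y Z)) (Asc M X Y Z))
      = Cmp M (lw M Y (Br M X Z)) (Cmp M (Asc M Y X Z) (rw M (Br M X Y) Z)))"

definition weakly_invertible :: "('o, 'm) smc \<Rightarrow> 'o \<Rightarrow> bool" where
  "weakly_invertible M A \<longleftrightarrow> (\<exists>B.
     (\<exists>u. iso_in M (TenO M A B) (Unit M) u) \<and> (\<exists>v. iso_in M (TenO M B A) (Unit M) v))"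

text \<open>Representatives (A, f) of morphisms X \<rightarrow> Y of P(M).\<close>
definition P_rep :: "('o, 'm) smc \<Rightarrow> 'o \<Rightarrow> 'o \<Rightarrow> 'o \<times> 'm \<Rightarrow> bool" where
  "P_rep M X Y p \<longleftrightarrow> weakly_invertible M (fst p) \<and> snd p \<in> Arr M X (TenO M Y (fst p))"

definition P_equiv :: "('o, 'm) smc \<Rightarrow> 'o \<Rightarrow> 'o \<times> 'm \<Rightarrow> 'o \<times> 'm \<Rightarrow> bool" where
  "P_equiv M Y p q \<longleftrightarrow>
     (\<exists>\<alpha>. iso_in M (fst p) (fst q) \<alpha> \<and> Cmp M (lw M Y \<alpha>) (snd p) = snd q)"

text \<open>The morphism [A,f] : X \<rightarrow> Y of P(M), i.e. the equivalence class of (A,f).\<close>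
definition P_class :: "('o, 'm) smc \<Rightarrow> 'o \<Rightarrow> 'o \<Rightarrow> 'o \<times> 'm \<Rightarrow> ('o \<times> 'm) set" where
  "P_class M X Y p = {q. P_rep M X Y q \<and> P_equiv M Y p q}"

text \<open>Composite of representatives (A,f) : X \<rightarrow> Y and (B,g) : Y \<rightarrow> Z.\<close>
definition P_comp_rep :: "('o, 'm) smc \<Rightarrow> 'o \<Rightarrow> 'o \<times> 'm \<Rightarrow> 'o \<times> 'm \<Rightarrow> 'o \<times> 'm" where
  "P_comp_rep M Z q p =
     (TenO M (fst q) (fst p),
      Cmp M (Asc M Z (fst q) (fst p)) (Cmp M (rw M (snd q) (fst p)) (snd p)))"

definition P_id_rep :: "('o, 'm) smc \<Rightarrow> 'o \<Rightarrow> 'o \<times> 'm" where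
  "P_id_rep M X = (Unit M, inv_in M (TenO M X (Unit M)) X (Ru M X))"

definition P_iso :: "('o, 'm) smc \<Rightarrow> 'o \<Rightarrow> 'o \<Rightarrow> 'o \<times> 'm \<Rightarrow> bool" where
  "P_iso M X Y p \<longleftrightarrow> P_rep M X Y p \<and> (\<exists>q. P_rep M Y X q \<and>
     P_class M X X (P_comp_rep M X q p) = P_class M X X (P_id_rep M X) \<and>
     P_class M Y Y (P_comp_rep M Y p q) = P_class M Y Y (P_id_rep M Y))"

text \<open>The functor \<pi>_M on morphisms f : X \<rightarrow> Y (returns a representative).\<close>
definition pi_rep :: "('o, 'm) smc \<Rightarrow> 'o \<Rightarrow> 'm \<Rightarrow> 'o \<times> 'm" where
  "pi_rep M Y f = (Unit M, Cmp M (inv_in M (TenO M Y (Unit M)) Y (Ru M Y)) f)"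

end

theory Submission
  imports Defs
begin

(* An inverse [B,g] of [A,f] in P(M) amounts to isomorphisms B \<otimes> A \<cong> I and A \<otimes> B \<cong> I
   turning a(g \<otimes> A)f into r\<^sup>-\<^sup>1 (up to X \<otimes> -) and a(f \<otimes> B)g into r\<^sup>-\<^sup>1 (up to Y \<otimes> -).
   The first makes f a split mono; the second makes f \<otimes> B a split epi, and tensoring with A and
   cancelling B \<otimes> A \<cong> I makes f a split epi, so f is invertible.
   Conversely, for invertible f and u : A \<otimes> B \<cong> I take g = (f\<^sup>-\<^sup>1 \<otimes> B) a\<^sup>-\<^sup>1 (Y \<otimes> u\<^sup>-\<^sup>1) r\<^sup>-\<^sup>1.
   Then [A,f][B,g] = id is immediate, while [B,g][A,f] = id needs an iso w : I \<rightarrow> B \<otimes> A with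
   a (u\<^sup>-\<^sup>1 \<otimes> A) l\<^sup>-\<^sup>1 = (A \<otimes> w) r\<^sup>-\<^sup>1; it exists because A \<otimes> - is full and faithful for
   weakly invertible A, and the pentagon, the triangle and Kelly's identity propagate this
   equation from A to Y \<otimes> A. *)

locale symmetric_monoidal =
  fixes M :: "('o, 'm) smc"
  assumes smc: "smc M"
begin

abbreviation cmp (infixl "\<cdot>" 55) where "g \<cdot> f \<equiv> Cmp M g f"
abbreviation tensor (infixr "\<otimes>" 60) where "f \<otimes> g \<equiv> TenA M f g"
abbreviation tensor_obj (infixr "\<odot>" 65) where "X \<odot> Y \<equiv> TenO M X Y"
abbreviation ident ("\<one>") where "\<one> X \<equiv> Id M X"
abbreviation I where "I \<equiv> Unit M"
abbreviation iso where "iso X Y f \<equiv> iso_in M X Y f"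
abbreviation inv where "inv X Y f \<equiv> inv_in M X Y f"
abbreviation a where "a X Y Z \<equiv> Asc M X Y Z"
abbreviation l where "l X \<equiv> Lu M X"
abbreviation r where "r X \<equiv> Ru M X"
abbreviation a' where "a' X Y Z \<equiv> inv ((X \<odot> Y) \<odot> Z) (X \<odot> (Y \<odot> Z)) (a X Y Z)"
abbreviation l' where "l' X \<equiv> inv (I \<odot> X) X (l X)"
abbreviation r' where "r' X \<equiv> inv (X \<odot> I) X (r X)"

lemmas smc_axioms = smc[unfolded smc_def lw_def rw_def]

lemma Arr_unique:
  "f \<in> Arr M X Y \<Longrightarrow> f \<in> Arr M X' Y' \<Longrightarrow> X = X' \<and> Y = Y'"
  by (meson smc_axioms)

lemma comp_in_Arr:
  "f \<in> Arr M X Y \<Longrightarrow> g \<in> Arr M Y Z \<Longrightarrow> g \<cdot> f \<in> Arr M X Z"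
  by (meson smc_axioms)

lemma id_in_Arr: "\<one> X \<in> Arr M X X"
  by (meson smc_axioms)

lemma comp_id_Arr: "f \<in> Arr M X Y \<Longrightarrow> f \<cdot> \<one> X = f"
  by (meson smc_axioms)

lemma id_comp_Arr: "f \<in> Arr M X Y \<Longrightarrow> \<one> Y \<cdot> f = f"
  by (meson smc_axioms)

lemma comp_assoc_Arr:
  "f \<in> Arr M W X \<Longrightarrow> g \<in> Arr M X Y \<Longrightarrow> h \<in> Arr M Y Z \<Longrightarrow>
    h \<cdot> (g \<cdot> f) = h \<cdot> g \<cdot> f"
  by (meson smc_axioms)

lemma tensor_in_Arr:
  "f \<in> Arr M X Y \<Longrightarrow> g \<in> Arr M X' Y' \<Longrightarrow>
    f \<otimes> g \<in> Arr M (X \<odot> X') (Y \<odot> Y')"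
  by (meson smc_axioms)

lemma tensor_id [simp]: "\<one> X \<otimes> \<one> Y = \<one> (X \<odot> Y)"
  by (meson smc_axioms)

lemma interchange_Arr:
  "f \<in> Arr M X Y \<Longrightarrow> g \<in> Arr M Y Z \<Longrightarrow> f' \<in> Arr M X' Y' \<Longrightarrow>
    g' \<in> Arr M Y' Z' \<Longrightarrow> (g \<cdot> f) \<otimes> (g' \<cdot> f') = (g \<otimes> g') \<cdot> (f \<otimes> f')"
  by (meson smc_axioms)

lemma a_iso: "iso ((X \<odot> Y) \<odot> Z) (X \<odot> (Y \<odot> Z)) (a X Y Z)"
  by (meson smc_axioms)

lemma a_natural_Arr:
  "f \<in> Arr M X X' \<Longrightarrow> g \<in> Arr M Y Y' \<Longrightarrow> h \<in> Arr M Z Z' \<Longrightarrow>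
    a X' Y' Z' \<cdot> ((f \<otimes> g) \<otimes> h) = (f \<otimes> (g \<otimes> h)) \<cdot> a X Y Z"
  by (meson smc_axioms)

lemma l_iso: "iso (I \<odot> X) X (l X)"
  by (meson smc_axioms)

lemma l_natural_Arr:
  "f \<in> Arr M X Y \<Longrightarrow> f \<cdot> l X = l Y \<cdot> (\<one> I \<otimes> f)"
  by (meson smc_axioms)

lemma r_iso: "iso (X \<odot> I) X (r X)"
  by (meson smc_axioms)

lemma r_natural_Arr:
  "f \<in> Arr M X Y \<Longrightarrow> f \<cdot> r X = r Y \<cdot> (f \<otimes> \<one> I)"
  by (meson smc_axioms)

lemma pentagon:
  "a W X (Y \<odot> Z) \<cdot> a (W \<odot> X) Y Z
    = (\<one> W \<otimes> a X Y Z) \<cdot> (a W (X \<odot> Y) Z \<cdot> (a W X Y \<otimes> \<one> Z))"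
  by (meson smc_axioms)

lemma triangle: "(\<one> X \<otimes> l Y) \<cdot> a X I Y = r X \<otimes> \<one> Y"
  by (meson smc_axioms)

text \<open>Hom-sets are disjoint (Arr_unique), so every arrow has a well-defined domain and
  codomain; typing side conditions then become equations the simplifier can discharge.\<close>
definition arr :: "'m \<Rightarrow> bool" where
  "arr f \<longleftrightarrow> (\<exists>X Y. f \<in> Arr M X Y)"
definition dom :: "'m \<Rightarrow> 'o" where
  "dom f = (SOME X. \<exists>Y. f \<in> Arr M X Y)"
definition cod :: "'m \<Rightarrow> 'o" where
  "cod f = (SOME Y. \<exists>X. f \<in> Arr M X Y)"

lemma arr_domcod:
  assumes "f \<in> Arr M X Y"
  shows "arr f" "dom f = X" "cod f = Y"
proof -
  show "arr f" using assms unfolding arr_def by blast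
  have "\<exists>Y. f \<in> Arr M (dom f) Y" unfolding dom_def by (rule someI_ex) (use assms in blast)
  then show "dom f = X" using assms Arr_unique by blast
  have "\<exists>X. f \<in> Arr M X (cod f)" unfolding cod_def by (rule someI_ex) (use assms in blast)
  then show "cod f = Y" using assms Arr_unique by blast
qed

lemma in_Arr_iff: "f \<in> Arr M X Y \<longleftrightarrow> arr f \<and> dom f = X \<and> cod f = Y"
  using arr_domcod by (metis arr_def)

lemma comp_simps [simp]:
  assumes "arr f" "arr g" "dom g = cod f"
  shows "arr (g \<cdot> f)" "dom (g \<cdot> f) = dom f" "cod (g \<cdot> f) = cod g"
  using comp_in_Arr[of f "dom f" "cod f" g "cod g"] assms
  by (simp_all add: in_Arr_iff)

lemma tensor_simps [simp]:
  assumes "arr f" "arr g"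
  shows "arr (f \<otimes> g)" "dom (f \<otimes> g) = dom f \<odot> dom g" "cod (f \<otimes> g) = cod f \<odot> cod g"
  using tensor_in_Arr[of f "dom f" "cod f" g "dom g" "cod g"] assms
  by (simp_all add: in_Arr_iff)

lemma id_simps [simp]: "arr (\<one> X)" "dom (\<one> X) = X" "cod (\<one> X) = X"
  using id_in_Arr by (rule arr_domcod)+

lemma comp_id [simp]: "arr f \<Longrightarrow> dom f = X \<Longrightarrow> f \<cdot> \<one> X = f"
  by (metis comp_id_Arr in_Arr_iff)

lemma id_comp [simp]: "arr f \<Longrightarrow> cod f = Y \<Longrightarrow> \<one> Y \<cdot> f = f"
  by (metis id_comp_Arr in_Arr_iff)

lemma comp_assoc [simp]:
  "arr f \<Longrightarrow> arr g \<Longrightarrow> arr h \<Longrightarrow> dom g = cod f \<Longrightarrow> dom h = cod g \<Longrightarrow> h \<cdot> (g \<cdot> f) = h \<cdot> g \<cdot> f"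
  using comp_assoc_Arr by (simp add: in_Arr_iff)

lemma interchange:
  "arr f \<Longrightarrow> arr g \<Longrightarrow> arr f' \<Longrightarrow> arr g' \<Longrightarrow> dom g = cod f \<Longrightarrow> dom g' = cod f' \<Longrightarrow>
    (g \<otimes> g') \<cdot> (f \<otimes> f') = (g \<cdot> f) \<otimes> (g' \<cdot> f')"
  using interchange_Arr by (simp add: in_Arr_iff)

lemma comp_interchange:
  "arr x \<Longrightarrow> arr f \<Longrightarrow> arr g \<Longrightarrow> arr f' \<Longrightarrow> arr g' \<Longrightarrow> dom g = cod f \<Longrightarrow> dom g' = cod f' \<Longrightarrow>
    dom x = cod g \<odot> cod g' \<Longrightarrow> x \<cdot> (g \<otimes> g') \<cdot> (f \<otimes> f') = x \<cdot> ((g \<cdot> f) \<otimes> (g' \<cdot> f'))"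
  by (simp add: interchange flip: comp_assoc)

lemma inv_in_Arr:
  assumes "iso X Y f"
  shows "inv X Y f \<in> Arr M Y X" "inv X Y f \<cdot> f = \<one> X" "f \<cdot> inv X Y f = \<one> Y"
proof -
  have "\<exists>g. g \<in> Arr M Y X \<and> g \<cdot> f = \<one> X \<and> f \<cdot> g = \<one> Y"
    using assms unfolding iso_in_def by blast
  then have "inv X Y f \<in> Arr M Y X \<and> inv X Y f \<cdot> f = \<one> X \<and> f \<cdot> inv X Y f = \<one> Y"
    unfolding inv_in_def by (rule someI_ex)
  then show "inv X Y f \<in> Arr M Y X" "inv X Y f \<cdot> f = \<one> X" "f \<cdot> inv X Y f = \<one> Y" by auto
qed

lemma iso_simps:
  assumes "iso X Y f"
  shows "arr f" "dom f = X" "cod f = Y"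
  using assms unfolding iso_in_def by (blast intro: arr_domcod)+

lemma inv_simps [simp]:
  assumes "iso X Y f"
  shows "arr (inv X Y f)" "dom (inv X Y f) = Y" "cod (inv X Y f) = X"
    "inv X Y f \<cdot> f = \<one> X" "f \<cdot> inv X Y f = \<one> Y"
  using inv_in_Arr[OF assms] by (blast intro: arr_domcod)+

lemma comp_inv_cancel [simp]:
  assumes "iso X Y f" "arr x"
  shows "dom x = X \<Longrightarrow> x \<cdot> inv X Y f \<cdot> f = x"
    and "dom x = Y \<Longrightarrow> x \<cdot> f \<cdot> inv X Y f = x"
  using assms by (simp_all add: iso_simps flip: comp_assoc)

lemma structure_simps [simp]:
  "arr (a X Y Z)" "dom (a X Y Z) = (X \<odot> Y) \<odot> Z" "cod (a X Y Z) = X \<odot> (Y \<odot> Z)"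
  "arr (a' X Y Z)" "dom (a' X Y Z) = X \<odot> (Y \<odot> Z)" "cod (a' X Y Z) = (X \<odot> Y) \<odot> Z"
  "arr (l X)" "dom (l X) = I \<odot> X" "cod (l X) = X"
  "arr (l' X)" "dom (l' X) = X" "cod (l' X) = I \<odot> X"
  "arr (r X)" "dom (r X) = X \<odot> I" "cod (r X) = X"
  "arr (r' X)" "dom (r' X) = X" "cod (r' X) = X \<odot> I"
  using iso_simps[OF a_iso] iso_simps[OF l_iso] iso_simps[OF r_iso] by (simp_all add: a_iso l_iso r_iso)

lemma iso_intro:
  "arr f \<Longrightarrow> arr g \<Longrightarrow> dom f = X \<Longrightarrow> cod f = Y \<Longrightarrow> dom g = Y \<Longrightarrow> cod g = X \<Longrightarrow>
    g \<cdot> f = \<one> X \<Longrightarrow> f \<cdot> g = \<one> Y \<Longrightarrow> iso X Y f"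
  unfolding iso_in_def by (metis in_Arr_iff)

lemma iso_id: "iso X X (\<one> X)"
  by (rule iso_intro[where g="\<one> X"]) simp_all

lemma iso_inv: "iso X Y f \<Longrightarrow> iso Y X (inv X Y f)"
  by (rule iso_intro[where g=f]) (simp_all add: iso_simps)

lemma iso_comp: "iso X Y f \<Longrightarrow> iso Y Z g \<Longrightarrow> iso X Z (g \<cdot> f)"
  by (rule iso_intro[where g="inv X Y f \<cdot> inv Y Z g"]) (simp_all add: iso_simps)

lemma iso_tensor: "iso X Y f \<Longrightarrow> iso X' Y' g \<Longrightarrow> iso (X \<odot> X') (Y \<odot> Y') (f \<otimes> g)"
  by (rule iso_intro[where g="inv X Y f \<otimes> inv X' Y' g"]) (simp_all add: iso_simps interchange)

lemma iso_if_left_right_inverse: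
  assumes "arr f" "arr g" "arr h" "dom f = X" "cod f = Y" "dom g = Y" "cod g = X"
    "dom h = Y" "cod h = X" "g \<cdot> f = \<one> X" "f \<cdot> h = \<one> Y"
  shows "iso X Y f"
proof -
  have "g = g \<cdot> (f \<cdot> h)" using assms by simp
  also have "\<dots> = g \<cdot> f \<cdot> h" using assms by (intro comp_assoc) simp_all
  also have "\<dots> = h" using assms by simp
  finally show ?thesis using assms by (intro iso_intro[of f g]) simp_all
qed

lemma right_inverse_of_iso:
  assumes "iso X Y f" "arr g" "dom g = Y" "cod g = X" "f \<cdot> g = \<one> Y"
  shows "g \<cdot> f = \<one> X"
proof -
  note f = iso_simps[OF assms(1)]
  have "g = inv X Y f \<cdot> f \<cdot> g" using assms by simp
  also have "\<dots> = inv X Y f \<cdot> (f \<cdot> g)" using assms f by (intro comp_assoc[symmetric]) simp_all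
  also have "\<dots> = inv X Y f" using assms f by simp
  finally show ?thesis using assms by simp
qed

lemma cancel_iso_left:
  assumes "iso Y Z h" "arr s" "arr t" "cod s = Y" "cod t = Y" "h \<cdot> s = h \<cdot> t"
  shows "s = t"
proof -
  have "s = inv Y Z h \<cdot> (h \<cdot> s)" using assms(1-4) iso_simps[OF assms(1)] by simp
  also have "\<dots> = t" using assms iso_simps[OF assms(1)] by simp
  finally show ?thesis .
qed

lemma cancel_iso_right:
  assumes "iso X Y h" "arr s" "arr t" "dom s = Y" "dom t = Y" "s \<cdot> h = t \<cdot> h"
  shows "s = t"
proof -
  have "s = s \<cdot> h \<cdot> inv X Y h" using assms(1-4) by simp
  also have "\<dots> = t" using assms by simp
  finally show ?thesis .
qed

lemma a_natural:
  "arr f \<Longrightarrow> arr g \<Longrightarrow> arr h \<Longrightarrow>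
    a (cod f) (cod g) (cod h) \<cdot> ((f \<otimes> g) \<otimes> h) = (f \<otimes> (g \<otimes> h)) \<cdot> a (dom f) (dom g) (dom h)"
  using a_natural_Arr by (simp add: in_Arr_iff)

lemma l_natural: "arr f \<Longrightarrow> f \<cdot> l (dom f) = l (cod f) \<cdot> (\<one> I \<otimes> f)"
  using l_natural_Arr by (simp add: in_Arr_iff)

lemma r_natural: "arr f \<Longrightarrow> f \<cdot> r (dom f) = r (cod f) \<cdot> (f \<otimes> \<one> I)"
  using r_natural_Arr by (simp add: in_Arr_iff)

lemma natural_inv:
  assumes "iso X Y h" "iso X' Y' k" "arr f" "arr g" "dom f = X" "cod f = X'" "dom g = Y" "cod g = Y'"
    "k \<cdot> f = g \<cdot> h"
  shows "inv X' Y' k \<cdot> g = f \<cdot> inv X Y h"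
proof -
  note hk = iso_simps[OF assms(1)] iso_simps[OF assms(2)]
  have "inv X' Y' k \<cdot> g = inv X' Y' k \<cdot> (g \<cdot> h) \<cdot> inv X Y h" using assms(1-8) hk by simp
  also have "\<dots> = inv X' Y' k \<cdot> (k \<cdot> f) \<cdot> inv X Y h" using assms(9) by simp
  also have "\<dots> = f \<cdot> inv X Y h" using assms(1-8) hk by simp
  finally show ?thesis .
qed

lemma a'_natural:
  "arr f \<Longrightarrow> arr g \<Longrightarrow> arr h \<Longrightarrow>
    a' (cod f) (cod g) (cod h) \<cdot> (f \<otimes> (g \<otimes> h)) = ((f \<otimes> g) \<otimes> h) \<cdot> a' (dom f) (dom g) (dom h)"
  by (rule natural_inv[OF a_iso a_iso]) (simp_all add: a_natural)

lemma r'_natural: "arr f \<Longrightarrow> r' (cod f) \<cdot> f = (f \<otimes> \<one> I) \<cdot> r' (dom f)"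
  by (rule natural_inv[OF r_iso r_iso]) (simp_all add: r_natural)

lemma tensor_unit_cancel:
  assumes "arr s" "arr t" "dom s = dom t" "cod s = cod t" "s \<otimes> \<one> I = t \<otimes> \<one> I"
  shows "s = t"
proof (rule cancel_iso_right[OF r_iso[of "dom s"]])
  show "s \<cdot> r (dom s) = t \<cdot> r (dom s)" using r_natural[of s] r_natural[of t] assms by simp
qed (use assms in simp_all)

lemma r_tensor: "r (X \<odot> Y) = (\<one> X \<otimes> r Y) \<cdot> a X Y I"
proof (rule tensor_unit_cancel)
  have n1: "a X Y I \<cdot> (\<one> (X \<odot> Y) \<otimes> l I) = (\<one> X \<otimes> (\<one> Y \<otimes> l I)) \<cdot> a X Y (I \<odot> I)"
    using a_natural[of "\<one> X" "\<one> Y" "l I"] by simp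
  have n2: "a X Y I \<cdot> ((\<one> X \<otimes> r Y) \<otimes> \<one> I) = (\<one> X \<otimes> (r Y \<otimes> \<one> I)) \<cdot> a X (Y \<odot> I) I"
    using a_natural[of "\<one> X" "r Y" "\<one> I"] by simp
  have "r (X \<odot> Y) \<otimes> \<one> I = (\<one> (X \<odot> Y) \<otimes> l I) \<cdot> a (X \<odot> Y) I I"
    using triangle[of "X \<odot> Y" I] by simp
  also have "\<dots> = a' X Y I \<cdot> (a X Y I \<cdot> (\<one> (X \<odot> Y) \<otimes> l I)) \<cdot> a (X \<odot> Y) I I"
    using a_iso by simp
  also have "\<dots> = a' X Y I \<cdot> (\<one> X \<otimes> (\<one> Y \<otimes> l I)) \<cdot> (a X Y (I \<odot> I) \<cdot> a (X \<odot> Y) I I)"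
    unfolding n1 by simp
  also have "\<dots> = a' X Y I \<cdot> (\<one> X \<otimes> ((\<one> Y \<otimes> l I) \<cdot> a Y I I)) \<cdot> a X (Y \<odot> I) I \<cdot> (a X Y I \<otimes> \<one> I)"
    unfolding pentagon by (simp add: comp_interchange)
  also have "\<dots> = a' X Y I \<cdot> (a X Y I \<cdot> ((\<one> X \<otimes> r Y) \<otimes> \<one> I)) \<cdot> (a X Y I \<otimes> \<one> I)"
    unfolding triangle n2 by simp
  also have "\<dots> = ((\<one> X \<otimes> r Y) \<cdot> a X Y I) \<otimes> \<one> I"
    using a_iso by (simp add: interchange)
  finally show "r (X \<odot> Y) \<otimes> \<one> I = ((\<one> X \<otimes> r Y) \<cdot> a X Y I) \<otimes> \<one> I" .
qed simp_all

lemma r'_tensor: "a' X Y I \<cdot> (\<one> X \<otimes> r' Y) = r' (X \<odot> Y)"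
proof (rule cancel_iso_right[OF r_iso])
  have "a' X Y I \<cdot> (\<one> X \<otimes> r' Y) \<cdot> r (X \<odot> Y) = a' X Y I \<cdot> (\<one> X \<otimes> r' Y) \<cdot> ((\<one> X \<otimes> r Y) \<cdot> a X Y I)"
    by (simp only: r_tensor)
  also have "\<dots> = r' (X \<odot> Y) \<cdot> r (X \<odot> Y)"
    using a_iso r_iso by (simp add: comp_interchange)
  finally show "a' X Y I \<cdot> (\<one> X \<otimes> r' Y) \<cdot> r (X \<odot> Y) = r' (X \<odot> Y) \<cdot> r (X \<odot> Y)" .
qed simp_all

lemma pentagon_inv:
  "a (X \<odot> Y) Z W \<cdot> (a' X Y Z \<otimes> \<one> W) = a' X Y (Z \<odot> W) \<cdot> (\<one> X \<otimes> a Y Z W) \<cdot> a X (Y \<odot> Z) W"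
proof -
  have "a (X \<odot> Y) Z W \<cdot> (a' X Y Z \<otimes> \<one> W)
      = a' X Y (Z \<odot> W) \<cdot> (a X Y (Z \<odot> W) \<cdot> a (X \<odot> Y) Z W) \<cdot> (a' X Y Z \<otimes> \<one> W)"
    using a_iso by simp
  also have "\<dots> = a' X Y (Z \<odot> W) \<cdot> (\<one> X \<otimes> a Y Z W) \<cdot> a X (Y \<odot> Z) W"
    unfolding pentagon using a_iso by (simp add: comp_interchange)
  finally show ?thesis .
qed

lemma triangle_inv: "a X I Y \<cdot> (r' X \<otimes> \<one> Y) = \<one> X \<otimes> l' Y"
proof -
  have "a X I Y \<cdot> (r' X \<otimes> \<one> Y) = (\<one> X \<otimes> l' Y) \<cdot> ((\<one> X \<otimes> l Y) \<cdot> a X I Y) \<cdot> (r' X \<otimes> \<one> Y)"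
    using l_iso by (simp add: interchange comp_interchange)
  also have "\<dots> = \<one> X \<otimes> l' Y"
    unfolding triangle using r_iso by (simp add: comp_interchange)
  finally show ?thesis .
qed

definition lcancel :: "'o \<Rightarrow> 'o \<Rightarrow> 'm \<Rightarrow> 'o \<Rightarrow> 'm" where
  "lcancel B A v Z = l Z \<cdot> (v \<otimes> \<one> Z) \<cdot> a' B A Z"

definition rcancel :: "'o \<Rightarrow> 'o \<Rightarrow> 'm \<Rightarrow> 'o \<Rightarrow> 'm" where
  "rcancel B A v Z = r Z \<cdot> (\<one> Z \<otimes> v) \<cdot> a Z B A"

lemma lcancel_iso: "iso (B \<odot> A) I v \<Longrightarrow> iso (B \<odot> (A \<odot> Z)) Z (lcancel B A v Z)"
  unfolding lcancel_def by (intro iso_comp[OF iso_inv[OF a_iso] iso_comp[OF iso_tensor l_iso]] iso_id)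

lemma rcancel_iso: "iso (B \<odot> A) I v \<Longrightarrow> iso ((Z \<odot> B) \<odot> A) Z (rcancel B A v Z)"
  unfolding rcancel_def by (intro iso_comp[OF a_iso iso_comp[OF iso_tensor r_iso]] iso_id)

lemma lcancel_natural:
  assumes v: "iso (B \<odot> A) I v" and s: "arr s"
  shows "lcancel B A v (cod s) \<cdot> (\<one> B \<otimes> (\<one> A \<otimes> s)) = s \<cdot> lcancel B A v (dom s)"
proof -
  note v' = iso_simps[OF v]
  have "lcancel B A v (cod s) \<cdot> (\<one> B \<otimes> (\<one> A \<otimes> s))
      = l (cod s) \<cdot> (v \<otimes> \<one> (cod s)) \<cdot> (a' B A (cod s) \<cdot> (\<one> B \<otimes> (\<one> A \<otimes> s)))"
    unfolding lcancel_def using s v' by simp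
  also have "\<dots> = l (cod s) \<cdot> ((v \<otimes> \<one> (cod s)) \<cdot> (\<one> (B \<odot> A) \<otimes> s)) \<cdot> a' B A (dom s)"
    using a'_natural[of "\<one> B" "\<one> A" s] s v' by simp
  also have "\<dots> = l (cod s) \<cdot> (\<one> I \<otimes> s) \<cdot> (v \<otimes> \<one> (dom s)) \<cdot> a' B A (dom s)"
    using s v' by (simp add: interchange comp_interchange)
  also have "\<dots> = s \<cdot> lcancel B A v (dom s)"
    unfolding lcancel_def using l_natural[OF s, symmetric] s v' by simp
  finally show ?thesis .
qed

lemma rcancel_natural:
  assumes v: "iso (B \<odot> A) I v" and s: "arr s"
  shows "rcancel B A v (cod s) \<cdot> ((s \<otimes> \<one> B) \<otimes> \<one> A) = s \<cdot> rcancel B A v (dom s)"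
proof -
  note v' = iso_simps[OF v]
  have "rcancel B A v (cod s) \<cdot> ((s \<otimes> \<one> B) \<otimes> \<one> A)
      = r (cod s) \<cdot> (\<one> (cod s) \<otimes> v) \<cdot> (a (cod s) B A \<cdot> ((s \<otimes> \<one> B) \<otimes> \<one> A))"
    unfolding rcancel_def using s v' by simp
  also have "\<dots> = r (cod s) \<cdot> ((\<one> (cod s) \<otimes> v) \<cdot> (s \<otimes> \<one> (B \<odot> A))) \<cdot> a (dom s) B A"
    using a_natural[of s "\<one> B" "\<one> A"] s v' by simp
  also have "\<dots> = r (cod s) \<cdot> (s \<otimes> \<one> I) \<cdot> (\<one> (dom s) \<otimes> v) \<cdot> a (dom s) B A"
    using s v' by (simp add: interchange comp_interchange)
  also have "\<dots> = s \<cdot> rcancel B A v (dom s)"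
    unfolding rcancel_def using r_natural[OF s, symmetric] s v' by simp
  finally show ?thesis .
qed

lemma lwhisker_faithful:
  assumes v: "iso (B \<odot> A) I v" and s: "arr s" and t: "arr t"
    and "dom s = dom t" "cod s = cod t" "\<one> A \<otimes> s = \<one> A \<otimes> t"
  shows "s = t"
proof (rule cancel_iso_right[OF lcancel_iso[OF v, of "dom s"] s t])
  show "s \<cdot> lcancel B A v (dom s) = t \<cdot> lcancel B A v (dom s)"
    using lcancel_natural[OF v s] lcancel_natural[OF v t] assms by simp
qed (use assms in simp_all)

lemma lwhisker_full:
  assumes v: "iso (B \<odot> A) I v" and u: "iso (A \<odot> B) I u"
    and m: "arr m" "dom m = A \<odot> Z" "cod m = A \<odot> Z'"
  shows "\<one> A \<otimes> (lcancel B A v Z' \<cdot> (\<one> B \<otimes> m) \<cdot> inv (B \<odot> (A \<odot> Z)) Z (lcancel B A v Z)) = m"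
    (is "\<one> A \<otimes> ?t = m")
proof -
  note iso_Z = lcancel_iso[OF v, of Z] and iso_Z' = lcancel_iso[OF v, of Z']
  have t: "arr ?t" "dom ?t = Z" "cod ?t = Z'"
    using m iso_Z iso_simps[OF iso_Z] iso_simps[OF iso_Z'] by simp_all
  have "lcancel B A v Z' \<cdot> (\<one> B \<otimes> (\<one> A \<otimes> ?t)) = ?t \<cdot> lcancel B A v Z"
    using lcancel_natural[OF v t(1)] t by simp
  also have "\<dots> = lcancel B A v Z' \<cdot> (\<one> B \<otimes> m)"
    using m iso_Z iso_simps[OF iso_Z] iso_simps[OF iso_Z'] by simp
  finally have "\<one> B \<otimes> (\<one> A \<otimes> ?t) = \<one> B \<otimes> m"
    by (rule cancel_iso_left[OF iso_Z', rotated -1]) (use m t in simp_all)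
  then show ?thesis
    by (rule lwhisker_faithful[OF u, rotated -1]) (use m t in simp_all)
qed

lemma right_inverse_from_tensor:
  assumes v: "iso (B \<odot> A) I v" and f: "arr f"
    and s: "arr s" "dom s = cod f \<odot> B" "cod s = dom f \<odot> B" "(f \<otimes> \<one> B) \<cdot> s = \<one> (cod f \<odot> B)"
  shows "\<exists>t. arr t \<and> dom t = cod f \<and> cod t = dom f \<and> f \<cdot> t = \<one> (cod f)"
proof -
  let ?R = "rcancel B A v"
  note R = rcancel_iso[OF v, of "dom f"] and R' = rcancel_iso[OF v, of "cod f"]
  define t where "t = ?R (dom f) \<cdot> (s \<otimes> \<one> A) \<cdot> inv ((cod f \<odot> B) \<odot> A) (cod f) (?R (cod f))"
  note R_simps = iso_simps[OF R] iso_simps[OF R']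
  have t: "arr t" "dom t = cod f" "cod t = dom f"
    unfolding t_def using s R' R_simps by simp_all
  have "f \<cdot> t = f \<cdot> ?R (dom f) \<cdot> (s \<otimes> \<one> A) \<cdot> inv ((cod f \<odot> B) \<odot> A) (cod f) (?R (cod f))"
    unfolding t_def using f s R' R_simps by simp
  also have "\<dots> = ?R (cod f) \<cdot> ((f \<otimes> \<one> B) \<otimes> \<one> A) \<cdot> (s \<otimes> \<one> A) \<cdot> inv ((cod f \<odot> B) \<odot> A) (cod f) (?R (cod f))"
    using rcancel_natural[OF v f] f s R' R_simps by simp
  also have "\<dots> = \<one> (cod f)"
    using f s R' R_simps by (simp add: comp_interchange)
  finally show ?thesis using t by blast
qed

lemma snake_tensor_left:
  assumes e: "arr e" "dom e = I" "cod e = A \<odot> B" and w: "arr w" "dom w = I" "cod w = B \<odot> A"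
    and key: "a A B A \<cdot> (e \<otimes> \<one> A) \<cdot> l' A = (\<one> A \<otimes> w) \<cdot> r' A"
  shows "a (Y \<odot> A) B A \<cdot> ((a' Y A B \<cdot> (\<one> Y \<otimes> e) \<cdot> r' Y) \<otimes> \<one> A) = (\<one> (Y \<odot> A) \<otimes> w) \<cdot> r' (Y \<odot> A)"
proof -
  have "a (Y \<odot> A) B A \<cdot> ((a' Y A B \<cdot> (\<one> Y \<otimes> e) \<cdot> r' Y) \<otimes> \<one> A)
      = a (Y \<odot> A) B A \<cdot> (a' Y A B \<otimes> \<one> A) \<cdot> ((\<one> Y \<otimes> e) \<otimes> \<one> A) \<cdot> (r' Y \<otimes> \<one> A)"
    using e by (simp add: interchange comp_interchange)
  also have "\<dots> = a' Y A (B \<odot> A) \<cdot> (\<one> Y \<otimes> a A B A) \<cdot> (a Y (A \<odot> B) A \<cdot> ((\<one> Y \<otimes> e) \<otimes> \<one> A)) \<cdot> (r' Y \<otimes> \<one> A)"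
    unfolding pentagon_inv using e by simp
  also have "\<dots> = a' Y A (B \<odot> A) \<cdot> (\<one> Y \<otimes> a A B A) \<cdot> (\<one> Y \<otimes> (e \<otimes> \<one> A)) \<cdot> (a Y I A \<cdot> (r' Y \<otimes> \<one> A))"
    using a_natural[of "\<one> Y" e "\<one> A"] e by simp
  also have "\<dots> = a' Y A (B \<odot> A) \<cdot> (\<one> Y \<otimes> (a A B A \<cdot> (e \<otimes> \<one> A) \<cdot> l' A))"
    unfolding triangle_inv using e by (simp add: comp_interchange)
  also have "\<dots> = a' Y A (B \<odot> A) \<cdot> (\<one> Y \<otimes> (\<one> A \<otimes> w)) \<cdot> (\<one> Y \<otimes> r' A)"
    unfolding key using w by (simp add: comp_interchange)
  also have "\<dots> = (\<one> (Y \<odot> A) \<otimes> w) \<cdot> (a' Y A I \<cdot> (\<one> Y \<otimes> r' A))"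
    using a'_natural[of "\<one> Y" "\<one> A" w] w by simp
  also have "\<dots> = (\<one> (Y \<odot> A) \<otimes> w) \<cdot> r' (Y \<odot> A)"
    unfolding r'_tensor ..
  finally show ?thesis .
qed

lemma weakly_invertible_unit: "weakly_invertible M I"
  unfolding weakly_invertible_def using l_iso[of I] by blast

lemma P_rep_id: "P_rep M X X (P_id_rep M X)"
  unfolding P_rep_def P_id_rep_def using weakly_invertible_unit by (simp add: in_Arr_iff)

lemma P_rep_in_P_class: "P_rep M X Y p \<Longrightarrow> p \<in> P_class M X Y p"
  unfolding P_class_def P_equiv_def P_rep_def lw_def using iso_id by (fastforce simp: in_Arr_iff)

lemma P_class_eqI:
  assumes \<alpha>: "iso A B \<alpha>" and f: "arr f" "cod f = Y \<odot> A" and g: "(\<one> Y \<otimes> \<alpha>) \<cdot> f = g"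
  shows "P_class M X Y (A, f) = P_class M X Y (B, g)"
proof -
  note \<alpha>' = iso_simps[OF \<alpha>]
  have "P_equiv M Y (A, f) q \<longleftrightarrow> P_equiv M Y (B, g) q" for q
  proof
    assume "P_equiv M Y (A, f) q"
    then obtain \<gamma> where \<gamma>: "iso A (fst q) \<gamma>" "(\<one> Y \<otimes> \<gamma>) \<cdot> f = snd q"
      unfolding P_equiv_def lw_def by auto
    have "(\<one> Y \<otimes> (\<gamma> \<cdot> inv A B \<alpha>)) \<cdot> g = (\<one> Y \<otimes> \<gamma>) \<cdot> f"
      unfolding g[symmetric] using \<alpha> \<alpha>' iso_simps[OF \<gamma>(1)] f by (simp add: interchange comp_interchange)
    then show "P_equiv M Y (B, g) q"
      unfolding P_equiv_def lw_def using iso_comp[OF iso_inv[OF \<alpha>] \<gamma>(1)] \<gamma>(2) by auto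
  next
    assume "P_equiv M Y (B, g) q"
    then obtain \<gamma> where \<gamma>: "iso B (fst q) \<gamma>" "(\<one> Y \<otimes> \<gamma>) \<cdot> g = snd q"
      unfolding P_equiv_def lw_def by auto
    have "(\<one> Y \<otimes> (\<gamma> \<cdot> \<alpha>)) \<cdot> f = (\<one> Y \<otimes> \<gamma>) \<cdot> g"
      unfolding g[symmetric] using \<alpha>' iso_simps[OF \<gamma>(1)] f by (simp add: interchange comp_interchange)
    then show "P_equiv M Y (A, f) q"
      unfolding P_equiv_def lw_def using iso_comp[OF \<alpha> \<gamma>(1)] \<gamma>(2) by auto
  qed
  then show ?thesis unfolding P_class_def by blast
qed

lemma P_class_eq_idE:
  assumes "P_class M X X (C, h) = P_class M X X (P_id_rep M X)"
  obtains \<alpha> where "iso C I \<alpha>" "(\<one> X \<otimes> \<alpha>) \<cdot> h = r' X"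
  using P_rep_in_P_class[OF P_rep_id, of X, folded assms]
  unfolding P_class_def P_equiv_def P_id_rep_def lw_def by auto

lemma P_iso_imp_iso:
  assumes f: "f \<in> Arr M X (Y \<odot> A)" and P: "P_iso M X Y (A, f)"
  shows "iso X (Y \<odot> A) f"
proof -
  have f': "arr f" "dom f = X" "cod f = Y \<odot> A" using f by (simp_all add: in_Arr_iff)
  obtain B g where "P_rep M Y X (B, g)"
    and left: "P_class M X X (P_comp_rep M X (B, g) (A, f)) = P_class M X X (P_id_rep M X)"
    and right: "P_class M Y Y (P_comp_rep M Y (A, f) (B, g)) = P_class M Y Y (P_id_rep M Y)"
    using P unfolding P_iso_def by auto
  then have g: "arr g" "dom g = Y" "cod g = X \<odot> B" by (simp_all add: P_rep_def in_Arr_iff)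
  obtain \<alpha> where \<alpha>: "iso (B \<odot> A) I \<alpha>"
    and \<alpha>_eq: "(\<one> X \<otimes> \<alpha>) \<cdot> (a X B A \<cdot> ((g \<otimes> \<one> A) \<cdot> f)) = r' X"
    using left unfolding P_comp_rep_def rw_def by (auto elim: P_class_eq_idE)
  obtain \<beta> where \<beta>: "iso (A \<odot> B) I \<beta>"
    and \<beta>_eq: "(\<one> Y \<otimes> \<beta>) \<cdot> (a Y A B \<cdot> ((f \<otimes> \<one> B) \<cdot> g)) = r' Y"
    using right unfolding P_comp_rep_def rw_def by (auto elim: P_class_eq_idE)
  have "rcancel B A \<alpha> X \<cdot> (g \<otimes> \<one> A) \<cdot> f = r X \<cdot> ((\<one> X \<otimes> \<alpha>) \<cdot> (a X B A \<cdot> ((g \<otimes> \<one> A) \<cdot> f)))"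
    unfolding rcancel_def using f' g iso_simps[OF \<alpha>] by simp
  then have left_inverse: "rcancel B A \<alpha> X \<cdot> (g \<otimes> \<one> A) \<cdot> f = \<one> X"
    unfolding \<alpha>_eq using r_iso by simp
  have "rcancel A B \<beta> Y \<cdot> ((f \<otimes> \<one> B) \<cdot> g) = r Y \<cdot> ((\<one> Y \<otimes> \<beta>) \<cdot> (a Y A B \<cdot> ((f \<otimes> \<one> B) \<cdot> g)))"
    unfolding rcancel_def using f' g iso_simps[OF \<beta>] by simp
  then have "rcancel A B \<beta> Y \<cdot> ((f \<otimes> \<one> B) \<cdot> g) = \<one> Y"
    unfolding \<beta>_eq using r_iso by simp
  then have "(f \<otimes> \<one> B) \<cdot> g \<cdot> rcancel A B \<beta> Y = \<one> ((Y \<odot> A) \<odot> B)"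
    by (rule right_inverse_of_iso[OF rcancel_iso[OF \<beta>], rotated -1]) (use f' g in simp_all)
  then obtain t where "arr t" "dom t = Y \<odot> A" "cod t = X" "f \<cdot> t = \<one> (Y \<odot> A)"
    using right_inverse_from_tensor[OF \<alpha> f'(1), of "g \<cdot> rcancel A B \<beta> Y"] f' g
      iso_simps[OF rcancel_iso[OF \<beta>, of Y]] by auto
  with left_inverse show ?thesis
    using f' g iso_simps[OF rcancel_iso[OF \<alpha>, of X]]
    by (intro iso_if_left_right_inverse[of f "rcancel B A \<alpha> X \<cdot> (g \<otimes> \<one> A)" t]) simp_all
qed

lemma left_composite_candidate_inverse:
  assumes f: "iso X (Y \<odot> A) f"
    and e: "arr e" "dom e = I" "cod e = A \<odot> B" and w: "arr w" "dom w = I" "cod w = B \<odot> A"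
    and key: "a A B A \<cdot> (e \<otimes> \<one> A) \<cdot> l' A = (\<one> A \<otimes> w) \<cdot> r' A"
  shows "a X B A \<cdot> ((((inv X (Y \<odot> A) f \<otimes> \<one> B) \<cdot> a' Y A B \<cdot> (\<one> Y \<otimes> e) \<cdot> r' Y) \<otimes> \<one> A) \<cdot> f)
    = (\<one> X \<otimes> w) \<cdot> r' X"
proof -
  let ?f' = "inv X (Y \<odot> A) f" and ?g = "a' Y A B \<cdot> (\<one> Y \<otimes> e) \<cdot> r' Y"
  note f_simps = iso_simps[OF f] inv_simps[OF f]
  have "a X B A \<cdot> (((?f' \<otimes> \<one> B) \<cdot> ?g) \<otimes> \<one> A) \<cdot> f
      = (a X B A \<cdot> ((?f' \<otimes> \<one> B) \<otimes> \<one> A)) \<cdot> (?g \<otimes> \<one> A) \<cdot> f"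
    using f_simps e by (simp add: interchange comp_interchange)
  also have "\<dots> = (?f' \<otimes> \<one> (B \<odot> A)) \<cdot> (a (Y \<odot> A) B A \<cdot> (?g \<otimes> \<one> A)) \<cdot> f"
    using a_natural[of ?f' "\<one> B" "\<one> A"] f_simps e by simp
  also have "\<dots> = (?f' \<otimes> \<one> (B \<odot> A)) \<cdot> (\<one> (Y \<odot> A) \<otimes> w) \<cdot> (r' (Y \<odot> A) \<cdot> f)"
    unfolding snake_tensor_left[OF e w key] using f_simps w by simp
  also have "\<dots> = (?f' \<otimes> \<one> (B \<odot> A)) \<cdot> (\<one> (Y \<odot> A) \<otimes> w) \<cdot> (f \<otimes> \<one> I) \<cdot> r' X"
    using r'_natural[of f] f_simps w by simp
  also have "\<dots> = (\<one> X \<otimes> w) \<cdot> r' X"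
    using f_simps w by (simp add: interchange comp_interchange)
  finally show ?thesis using f_simps e by simp
qed

text \<open>w is the preimage under A \<otimes> - of A \<otimes> I \<cong> A \<cong> I \<otimes> A \<rightarrow> (A \<otimes> B) \<otimes> A \<cong> A \<otimes> (B \<otimes> A).\<close>
lemma snake_preimage:
  assumes u: "iso (A \<odot> B) I u" and v: "iso (B \<odot> A) I v"
  obtains w where "iso I (B \<odot> A) w" "a A B A \<cdot> (inv (A \<odot> B) I u \<otimes> \<one> A) \<cdot> l' A = (\<one> A \<otimes> w) \<cdot> r' A"
proof -
  define m where "m = a A B A \<cdot> (inv (A \<odot> B) I u \<otimes> \<one> A) \<cdot> l' A \<cdot> r A"
  have m: "iso (A \<odot> I) (A \<odot> (B \<odot> A)) m"
    unfolding m_def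
    by (intro iso_comp[OF r_iso iso_comp[OF iso_inv[OF l_iso] iso_comp[OF iso_tensor a_iso]]] iso_inv u iso_id)
  define w where "w = lcancel B A v (B \<odot> A) \<cdot> (\<one> B \<otimes> m) \<cdot> inv (B \<odot> (A \<odot> I)) I (lcancel B A v I)"
  have w: "iso I (B \<odot> A) w"
    unfolding w_def
    by (intro iso_comp[OF iso_inv[OF lcancel_iso[OF v]] iso_comp[OF iso_tensor[OF iso_id m] lcancel_iso[OF v]]])
  have "\<one> A \<otimes> w = m"
    unfolding w_def using lwhisker_full[OF v u] iso_simps[OF m] by blast
  then have "a A B A \<cdot> (inv (A \<odot> B) I u \<otimes> \<one> A) \<cdot> l' A = (\<one> A \<otimes> w) \<cdot> r' A"
    unfolding m_def using u r_iso by simp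
  with w show thesis by (rule that)
qed

lemma iso_imp_P_iso:
  assumes A: "weakly_invertible M A" and f: "iso X (Y \<odot> A) f"
  shows "P_iso M X Y (A, f)"
proof -
  note f_simps = iso_simps[OF f]
  obtain B u v where u: "iso (A \<odot> B) I u" and v: "iso (B \<odot> A) I v"
    using A unfolding weakly_invertible_def by blast
  then have B: "weakly_invertible M B" unfolding weakly_invertible_def by blast
  obtain w where w: "iso I (B \<odot> A) w"
    and key: "a A B A \<cdot> (inv (A \<odot> B) I u \<otimes> \<one> A) \<cdot> l' A = (\<one> A \<otimes> w) \<cdot> r' A"
    using snake_preimage[OF u v] .
  define g where "g = (inv X (Y \<odot> A) f \<otimes> \<one> B) \<cdot> a' Y A B \<cdot> (\<one> Y \<otimes> inv (A \<odot> B) I u) \<cdot> r' Y"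
  have g: "arr g" "dom g = Y" "cod g = X \<odot> B"
    unfolding g_def using f f_simps u by simp_all
  have "P_class M X X (P_comp_rep M X (B, g) (A, f)) = P_class M X X (P_id_rep M X)"
    unfolding P_comp_rep_def P_id_rep_def rw_def fst_conv snd_conv
  proof (rule P_class_eqI[OF iso_inv[OF w]])
    show "(\<one> X \<otimes> inv I (B \<odot> A) w) \<cdot> (a X B A \<cdot> ((g \<otimes> \<one> A) \<cdot> f)) = r' X"
      unfolding g_def left_composite_candidate_inverse[OF f inv_simps(1-3)[OF u] iso_simps[OF w] key]
      using w iso_simps[OF w] by (simp add: interchange comp_interchange)
  qed (use f_simps g in simp_all)
  moreover have "P_class M Y Y (P_comp_rep M Y (A, f) (B, g)) = P_class M Y Y (P_id_rep M Y)"
    unfolding P_comp_rep_def P_id_rep_def rw_def fst_conv snd_conv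
  proof (rule P_class_eqI[OF u])
    show "(\<one> Y \<otimes> u) \<cdot> (a Y A B \<cdot> ((f \<otimes> \<one> B) \<cdot> g)) = r' Y"
      unfolding g_def using f f_simps u iso_simps[OF u] a_iso by (simp add: interchange comp_interchange)
  qed (use f_simps g in simp_all)
  moreover have "P_rep M Y X (B, g)" and "P_rep M X Y (A, f)"
    unfolding P_rep_def using A B g f_simps by (simp_all add: in_Arr_iff)
  ultimately show ?thesis unfolding P_iso_def by blast
qed

lemma pi_reflects_iso:
  assumes f: "f \<in> Arr M X Y" and P: "P_iso M X Y (pi_rep M Y f)"
  shows "iso X Y f"
proof -
  have f': "arr f" "dom f = X" "cod f = Y" using f by (simp_all add: in_Arr_iff)
  then have "r' Y \<cdot> f \<in> Arr M X (Y \<odot> I)" by (simp add: in_Arr_iff)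
  then have "iso X (Y \<odot> I) (r' Y \<cdot> f)"
    using P_iso_imp_iso P unfolding pi_rep_def by blast
  then have "iso X Y (r Y \<cdot> (r' Y \<cdot> f))" using r_iso by (rule iso_comp)
  then show ?thesis using f' r_iso by simp
qed

end

theorem lemma3p6:
  fixes M :: "('o, 'm) smc"
  assumes "smc M"
  shows "(\<forall>X Y A f. weakly_invertible M A \<longrightarrow> f \<in> Arr M X (TenO M Y A) \<longrightarrow>
            (P_iso M X Y (A, f) \<longleftrightarrow> iso_in M X (TenO M Y A) f))
       \<and> (\<forall>X Y f. f \<in> Arr M X Y \<longrightarrow> P_iso M X Y (pi_rep M Y f) \<longrightarrow> iso_in M X Y f)"
proof -
  interpret symmetric_monoidal M by (rule symmetric_monoidal.intro) (rule assms)
  show ?thesis using P_iso_imp_iso iso_imp_P_iso pi_reflects_iso by blast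
qed

end
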